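(* Let $\mathbf{X}\in\mathbb{R}^{n\times d}$ with rows $\mathbf{X}_1,\ldots,\mathbf{X}_n$ and columns $\mathbf{X}_{\cdot 1},\ldots,\mathbf{X}_{\cdot d}$, let $u$ be a utility function, $\lambda>0$, and let $$\mathcal{P}_\lambda(\mathbf{w})=-\frac1n\sum_{j=1}^n u(\mathbf{w}^{\top}\mathbf{X}_j)+\lambda\|\mathbf{w}\|_1,\qquad\mathcal{D}_\lambda(\boldsymbol{\theta})=\frac1n\sum_{j=1}^n u^*(n\lambda\theta_j),$$ with feasible sets $\mathcal{C}_P=\mathrm{dom}(\mathcal{P}_\lambda)\cap\mathbb{R}^d_+$ and $\mathcal{C}_D=\mathrm{dom}(\mathcal{D}_\lambda)\cap\{\boldsymbol{\theta}:\|\phi(\mathbf{X}^{\top}\boldsymbol{\theta})\|_\infty\leq1\}$; let $\mathbf{w}^*$ minimize $\mathcal{P}_\lambda$ over $\mathcal{C}_P$ and $\boldsymbol{\theta}^*$ maximize $\mathcal{D}_\lambda$ over $\mathcal{C}_D$. Suppose $\mathcal{D}_\lambda$ is $\alpha$-strongly concave. Then for any $(\mathbf{w},\boldsymbol{\theta})\in\mathcal{C}_P\times\mathcal{C}_D$, $\boldsymbol{\theta}^*\in\mathcal{B}(\boldsymbol{\theta},r)$ with $r=\sqrt{2\,\mathrm{Gap}_\lambda(\mathbf{w},\boldsymbol{\theta})/\alpha}$. Furthermore, for each $j\in[d]$: if $\phi(\mathbf{X}_{\cdot j}^{\top}\boldsymbol{\theta})+r\|\mathbf{X}_{\cdot j}\|_2<1$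 then $w_j^*=0$.
   Context: A utility function is an increasing concave function $u$; $u^*(\theta)=\inf_z\{\theta z-u(z)\}$ is its conjugate as used in the Fenchel–Rockafellar dual of $\min_{\mathbf{w}\geq0}\mathcal{P}_\lambda(\mathbf{w})$. $\phi(x)=\max\{x,0\}$ entrywise; $\mathrm{Gap}_\lambda(\mathbf{w},\boldsymbol{\theta})=\mathcal{P}_\lambda(\mathbf{w})-\mathcal{D}_\lambda(\boldsymbol{\theta})$; $\mathcal{B}(\boldsymbol{\theta},r)$ is the closed Euclidean ball of radius $r$ centered at $\boldsymbol{\theta}$. *)

theory Defs
  imports "HOL-Analysis.Analysis"
begin

text \<open>Utility functions are extended-valued: u : real \<Rightarrow> real \<union> {-\<infinity>}
  (as e.g. the logarithmic utility). Concavity is the usual extended-valued one.\<close>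

definition ext_concave :: "(real \<Rightarrow> ereal) \<Rightarrow> bool" where
  "ext_concave u \<longleftrightarrow>
     (\<forall>x y t. 0 < t \<and> t < 1 \<longrightarrow>
        ereal t * u x + ereal (1 - t) * u y \<le> u (t * x + (1 - t) * y))"

definition utility :: "(real \<Rightarrow> ereal) \<Rightarrow> bool" where
  "utility u \<longleftrightarrow> mono u \<and> ext_concave u \<and> (\<forall>z. u z < \<infinity>) \<and> (\<exists>z. u z > - \<infinity>)"

definition uconj :: "(real \<Rightarrow> ereal) \<Rightarrow> real \<Rightarrow> ereal" where
  "uconj u \<theta> = (INF z. ereal (\<theta> * z) - u z)"

definition phi :: "real ^ 'd \<Rightarrow> real ^ 'd" where
  "phi v = (\<chi> i. max (v $ i) 0)"

definition l1norm :: "real ^ 'd \<Rightarrow> real" where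
  "l1norm w = (\<Sum>i\<in>UNIV. \<bar>w $ i\<bar>)"

text \<open>Rows of X (indexed by 'n, n = CARD('n)) are the samples X_j \<in> R^d.\<close>
definition primal_obj :: "real ^ 'd ^ 'n \<Rightarrow> (real \<Rightarrow> ereal) \<Rightarrow> real \<Rightarrow> real ^ 'd \<Rightarrow> ereal" where
  "primal_obj X u lam w =
     - (ereal (1 / real CARD('n)) * (\<Sum>j\<in>UNIV. u (w \<bullet> (X $ j)))) + ereal (lam * l1norm w)"

definition dual_obj :: "real ^ 'd ^ 'n \<Rightarrow> (real \<Rightarrow> ereal) \<Rightarrow> real \<Rightarrow> real ^ 'n \<Rightarrow> ereal" where
  "dual_obj X u lam \<theta> =
     ereal (1 / real CARD('n)) * (\<Sum>j\<in>UNIV. uconj u (real CARD('n) * lam * \<theta> $ j))"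

definition primal_feasible :: "real ^ 'd ^ 'n \<Rightarrow> (real \<Rightarrow> ereal) \<Rightarrow> real \<Rightarrow> (real ^ 'd) set" where
  "primal_feasible X u lam = {w. primal_obj X u lam w < \<infinity> \<and> (\<forall>i. 0 \<le> w $ i)}"

definition dual_feasible :: "real ^ 'd ^ 'n \<Rightarrow> (real \<Rightarrow> ereal) \<Rightarrow> real \<Rightarrow> (real ^ 'n) set" where
  "dual_feasible X u lam =
     {\<theta>. dual_obj X u lam \<theta> > - \<infinity> \<and> infnorm (phi (transpose X *v \<theta>)) \<le> 1}"

definition strongly_concave :: "real \<Rightarrow> ('a::real_normed_vector \<Rightarrow> ereal) \<Rightarrow> bool" where
  "strongly_concave \<alpha> D \<longleftrightarrow> 0 < \<alpha> \<and>
     (\<forall>a b t. 0 < t \<and> t < 1 \<longrightarrow>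
        ereal t * D a + ereal (1 - t) * D b + ereal (\<alpha> / 2 * t * (1 - t) * (norm (a - b))\<^sup>2)
          \<le> D (t *\<^sub>R a + (1 - t) *\<^sub>R b))"

definition gap :: "real ^ 'd ^ 'n \<Rightarrow> (real \<Rightarrow> ereal) \<Rightarrow> real \<Rightarrow> real ^ 'd \<Rightarrow> real ^ 'n \<Rightarrow> ereal" where
  "gap X u lam w \<theta> = primal_obj X u lam w - dual_obj X u lam \<theta>"

end

theory Submission
  imports Defs
begin

text \<open>Strong concavity of the dual objective forces its coordinate functions, i.e. the conjugate
  \<open>u\<^sup>*\<close>, to be strongly concave. Hence \<open>u\<close> is finite everywhere and has a unique supergradient at
  every point, so it is differentiable. The first-order conditions of the primal minimizer
  \<open>w\<^sup>*\<close> then produce a dual feasible point with the same objective value, so there is no duality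
  gap and \<open>w\<^sup>*\<^sub>j > 0\<close> forces \<open>column j X \<bullet> \<theta>\<^sup>* = 1\<close> (complementary slackness). Strong concavity around the
  maximizer \<open>\<theta>\<^sup>*\<close> gives \<open>\<alpha>/2 \<parallel>\<theta> - \<theta>\<^sup>*\<parallel>\<^sup>2 \<le> D(\<theta>\<^sup>*) - D(\<theta>) \<le> Gap(w, \<theta>)\<close>, and Cauchy-Schwarz on
  that ball yields the screening rule.\<close>

definition supergradient :: "(real \<Rightarrow> real) \<Rightarrow> real \<Rightarrow> real \<Rightarrow> bool" where
  "supergradient f z g \<longleftrightarrow> (\<forall>y. f y \<le> f z + g * (y - z))"

lemma concave_slope_antimono:
  fixes f :: "real \<Rightarrow> real"
  assumes "concave_on UNIV f" "y < y'" "y \<noteq> z" "y' \<noteq> z"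
  shows "(f y' - f z) / (y' - z) \<le> (f y - f z) / (y - z)"
proof -
  define sl where "sl p q = (f p - f q) / (p - q)" for p q
  have sl_sym: "sl p q = sl q p" for p q
    unfolding sl_def by (metis minus_diff_eq divide_minus_right minus_divide_left)
  have cvx: "convex_on UNIV (\<lambda>x. - f x)"
    using assms(1) by (simp add: concave_on_def)
  have sl_mono: "sl a c \<le> sl a b" "sl b c \<le> sl a c" if "a < b" "b < c" for a b c
    using convex_on_slope_le[OF cvx _ _ that] unfolding sl_def
    by (simp_all add: minus_divide_left[symmetric] diff_divide_distrib)
  consider "z < y" | "y < z" "z < y'" | "y' < z"
    using assms by linarith
  then have "sl y' z \<le> sl y z"
    by cases (use sl_mono[of z y y'] sl_mono[of y z y'] sl_mono[of y y' z] assms sl_sym in auto)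
  then show ?thesis unfolding sl_def .
qed

lemma supergradient_iff_slope_bounds:
  "supergradient f z g \<longleftrightarrow>
     (\<forall>y>z. (f y - f z) / (y - z) \<le> g) \<and> (\<forall>y<z. g \<le> (f y - f z) / (y - z))"
proof -
  have "f y \<le> f z + g * (y - z) \<longleftrightarrow>
      (y > z \<longrightarrow> (f y - f z) / (y - z) \<le> g) \<and> (y < z \<longrightarrow> g \<le> (f y - f z) / (y - z))" for y
    by (cases y z rule: linorder_cases) (auto simp: pos_divide_le_eq neg_le_divide_eq mult.commute)
  then show ?thesis unfolding supergradient_def by auto
qed

lemma antimono_tendsto_at_if_Sup_eq_Inf:
  fixes sl :: "real \<Rightarrow> real"
  assumes antimono: "\<And>y y'. y < y' \<Longrightarrow> y \<noteq> z \<Longrightarrow> y' \<noteq> z \<Longrightarrow> sl y' \<le> sl y"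
    and Sup_Inf: "Sup (sl ` {z<..}) = Inf (sl ` {..<z})"
  shows "(sl \<longlongrightarrow> Sup (sl ` {z<..})) (at z)"
  unfolding LIM_eq
proof (intro allI impI)
  define g where "g = Sup (sl ` {z<..})"
  have bdd_right: "bdd_above (sl ` {z<..})"
    by (rule bdd_aboveI[of _ "sl (z - 1)"]) (auto intro: antimono)
  have bdd_left: "bdd_below (sl ` {..<z})"
    by (rule bdd_belowI[of _ "sl (z + 1)"]) (auto intro: antimono)
  fix e :: real assume "e > 0"
  then obtain y1 where y1: "y1 > z" "g - e < sl y1"
    using less_cSup_iff[OF _ bdd_right, of "g - e"] unfolding g_def by auto
  obtain y2 where y2: "y2 < z" "sl y2 < g + e"
    using cInf_less_iff[OF _ bdd_left, of "g + e"] \<open>e > 0\<close> unfolding g_def Sup_Inf by auto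
  have "norm (sl x - g) < e" if "x \<noteq> z" "y2 < x" "x < y1" for x
  proof (cases "z < x")
    case True
    then show ?thesis
      using antimono[of x y1] y1 cSup_upper[OF _ bdd_right, of "sl x"] that unfolding g_def by auto
  next
    case False
    then show ?thesis
      using antimono[of y2 x] y2 cInf_lower[OF _ bdd_left, of "sl x"] that unfolding g_def Sup_Inf by auto
  qed
  then show "\<exists>d>0. \<forall>x. x \<noteq> z \<and> norm (x - z) < d \<longrightarrow> norm (sl x - Sup (sl ` {z<..})) < e"
    using y1 y2 unfolding g_def by (intro exI[of _ "min (y1 - z) (z - y2)"]) auto
qed

lemma concave_has_real_derivative_if_unique_supergradient:
  fixes f :: "real \<Rightarrow> real"
  assumes conc: "concave_on UNIV f"
    and unique: "\<And>g g'. supergradient f z g \<Longrightarrow> supergradient f z g' \<Longrightarrow> g = g'"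
  obtains g where "(f has_real_derivative g) (at z)" "supergradient f z g"
proof -
  define sl where "sl y = (f y - f z) / (y - z)" for y
  have antimono: "sl y' \<le> sl y" if "y < y'" "y \<noteq> z" "y' \<noteq> z" for y y'
    unfolding sl_def using concave_slope_antimono[OF conc that] .
  have bdd_right: "bdd_above (sl ` {z<..})"
    by (rule bdd_aboveI[of _ "sl (z - 1)"]) (auto intro: antimono)
  have bdd_left: "bdd_below (sl ` {..<z})"
    by (rule bdd_belowI[of _ "sl (z + 1)"]) (auto intro: antimono)
  \<comment> \<open>The right and left derivatives are both supergradients, hence equal.\<close>
  define g where "g = Sup (sl ` {z<..})"
  have "supergradient f z g"
    unfolding supergradient_iff_slope_bounds sl_def[symmetric] g_def
    using bdd_right by (auto intro: cSup_upper intro!: cSup_least antimono)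
  moreover have "supergradient f z (Inf (sl ` {..<z}))"
    unfolding supergradient_iff_slope_bounds sl_def[symmetric]
    using bdd_left by (auto intro: cInf_lower intro!: cInf_greatest antimono)
  ultimately have "g = Inf (sl ` {..<z})"
    by (rule unique)
  then have "(sl \<longlongrightarrow> g) (at z)"
    using antimono_tendsto_at_if_Sup_eq_Inf[of z sl] antimono unfolding g_def by blast
  then have "(f has_real_derivative g) (at z)"
    unfolding has_field_derivative_iff sl_def .
  with that \<open>supergradient f z g\<close> show ?thesis
    by blast
qed

lemma uconj_le: "uconj u s \<le> ereal (s * z) - u z"
  unfolding uconj_def by (rule INF_lower) simp

lemma uconj_less_PInf:
  assumes "utility u"
  shows "uconj u s < \<infinity>"
proof -
  obtain z where "u z > - \<infinity>" "u z < \<infinity>"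
    using assms unfolding utility_def by auto
  then obtain r where "u z = ereal r"
    by (cases "u z") auto
  then show ?thesis
    using uconj_le[of u s z] by auto
qed

lemma uconj_supergradient:
  assumes "supergradient f z g"
  shows "uconj (ereal \<circ> f) g = ereal (g * z - f z)"
proof (rule antisym)
  show "uconj (ereal \<circ> f) g \<le> ereal (g * z - f z)"
    using uconj_le[of "ereal \<circ> f" g z] by simp
  show "ereal (g * z - f z) \<le> uconj (ereal \<circ> f) g"
    unfolding uconj_def
    using assms unfolding supergradient_def by (auto intro!: INF_greatest simp: algebra_simps)
qed

lemma uconj_ge_affine_if_MInf:
  assumes ut: "utility u" and a: "u a = - \<infinity>"
    and s1: "uconj u s1 = ereal p1" and "s1 \<le> s"
  shows "ereal (p1 + (s - s1) * a) \<le> uconj u s"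
  unfolding uconj_def
proof (rule INF_greatest)
  fix z
  have "mono u" "u z < \<infinity>"
    using ut unfolding utility_def by auto
  show "ereal (p1 + (s - s1) * a) \<le> ereal (s * z) - u z"
  proof (cases "u z")
    case (real r)
    have "a < z"
      using monoD[OF \<open>mono u\<close>, of z a] a real by (cases "z \<le> a") auto
    then have "(s - s1) * a \<le> (s - s1) * z"
      using \<open>s1 \<le> s\<close> by (simp add: mult_left_mono)
    moreover have "p1 \<le> s1 * z - r"
      using uconj_le[of u s1 z] s1 real by simp
    ultimately show ?thesis
      using real by (simp add: algebra_simps)
  qed (use \<open>u z < \<infinity>\<close> in auto)
qed

lemma strongly_concave_midpoint:
  fixes c :: "real \<Rightarrow> ereal"
  assumes "strongly_concave \<kappa> c" "c a = ereal p" "c b = ereal q"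
  shows "ereal ((p + q) / 2 + \<kappa> / 8 * (a - b)\<^sup>2) \<le> c ((a + b) / 2)"
proof -
  have "\<forall>a b t. 0 < t \<and> t < 1 \<longrightarrow> ereal t * c a + ereal (1 - t) * c b
      + ereal (\<kappa> / 2 * t * (1 - t) * (norm (a - b))\<^sup>2) \<le> c (t *\<^sub>R a + (1 - t) *\<^sub>R b)"
    using assms(1) unfolding strongly_concave_def by blast
  from this[rule_format, of "1 / 2" a b] show ?thesis
    using assms(2,3) by (simp add: add_divide_distrib)
qed

text \<open>If \<open>u a = -\<infinity>\<close>, then \<open>s \<mapsto> uconj u s - s * a\<close> is finite and nondecreasing on a
  half-line, while strong concavity makes its increments over unit steps drop by \<open>\<kappa>\<close> each time.\<close>
lemma utility_finite_if_uconj_strongly_concave: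
  assumes ut: "utility u" and sc: "strongly_concave \<kappa> (uconj u)"
    and s0: "uconj u s0 = ereal p0"
  shows "u z > - \<infinity>"
proof (rule ccontr)
  assume "\<not> u z > - \<infinity>"
  then have z: "u z = - \<infinity>" by simp
  define V where "V s = real_of_ereal (uconj u s) - s * z" for s
  have fin: "uconj u s = ereal (V s + s * z)" if "s0 \<le> s" for s
  proof -
    have "ereal (p0 + (s - s0) * z) \<le> uconj u s"
      using uconj_ge_affine_if_MInf[OF ut z s0 that] .
    then show ?thesis
      using uconj_less_PInf[OF ut, of s] unfolding V_def by (cases "uconj u s") auto
  qed
  have V_mono: "V s \<le> V s'" if "s0 \<le> s" "s \<le> s'" for s s'
    using uconj_ge_affine_if_MInf[OF ut z fin[OF that(1)] that(2)] fin[of s'] that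
    by (simp add: algebra_simps)
  have V_concave: "V s + V (s + 2) + \<kappa> \<le> 2 * V (s + 1)" if "s0 \<le> s" for s
  proof -
    have mid: "(s + (s + 2)) / 2 = s + 1" by simp
    have "ereal ((V s + s * z + (V (s + 2) + (s + 2) * z)) / 2 + \<kappa> / 8 * (s - (s + 2))\<^sup>2)
        \<le> ereal (V (s + 1) + (s + 1) * z)"
      using strongly_concave_midpoint[OF sc fin[of s] fin[of "s + 2"]] fin[of "s + 1"] that
      unfolding mid by simp
    then show ?thesis
      by (simp add: field_simps power2_eq_square)
  qed
  define d where "d m = V (s0 + real m + 1) - V (s0 + real m)" for m :: nat
  have decrease: "d m \<le> d 0 - \<kappa> * real m" for m
  proof (induction m)
    case (Suc m)
    then show ?case
      using V_concave[of "s0 + real m"] unfolding d_def by (simp add: algebra_simps)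
  qed simp
  have nonneg: "0 \<le> d m" for m
    using V_mono[of "s0 + real m" "s0 + real m + 1"] unfolding d_def by simp
  obtain m where "d 0 < real m * \<kappa>"
    using ex_less_of_nat_mult[of \<kappa> "d 0"] sc unfolding strongly_concave_def by auto
  then show False
    using decrease[of m] nonneg[of m] by (simp add: mult.commute)
qed

lemma supergradient_unique_if_uconj_strongly_concave:
  assumes sc: "strongly_concave \<kappa> (uconj (ereal \<circ> f))"
    and g: "supergradient f z g" and g': "supergradient f z g'"
  shows "g = g'"
proof -
  have g_mid: "supergradient f z ((g + g') / 2)"
    unfolding supergradient_def
  proof
    fix y
    have "f y \<le> f z + g * (y - z)" "f y \<le> f z + g' * (y - z)"
      using g g' unfolding supergradient_def by auto
    then show "f y \<le> f z + (g + g') / 2 * (y - z)"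
      by (simp add: field_simps)
  qed
  have "ereal (((g * z - f z) + (g' * z - f z)) / 2 + \<kappa> / 8 * (g - g')\<^sup>2)
      \<le> ereal ((g + g') / 2 * z - f z)"
    using strongly_concave_midpoint[OF sc uconj_supergradient[OF g] uconj_supergradient[OF g']]
    unfolding uconj_supergradient[OF g_mid] by simp
  then have "\<kappa> * (g - g')\<^sup>2 \<le> 0"
    by (simp add: field_simps)
  then show ?thesis
    using sc unfolding strongly_concave_def by (simp add: mult_le_0_iff)
qed

lemma strongly_concave_restrict_line:
  fixes D :: "'a::real_normed_vector \<Rightarrow> ereal" and h :: "real \<Rightarrow> ereal"
  assumes sc: "strongly_concave \<alpha> D" and "c > 0" and "v \<noteq> 0"
    and D_line: "\<And>s. D (x0 + s *\<^sub>R v) = ereal c * (h s + ereal A)"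
    and h_fin: "\<And>s. h s < \<infinity>"
  shows "strongly_concave (\<alpha> * (norm v)\<^sup>2 / c) h"
  unfolding strongly_concave_def
proof (intro conjI allI impI)
  show "0 < \<alpha> * (norm v)\<^sup>2 / c"
    using sc \<open>c > 0\<close> \<open>v \<noteq> 0\<close> unfolding strongly_concave_def by simp
  fix a b t :: real
  assume t: "0 < t \<and> t < 1"
  define m where "m = t * a + (1 - t) * b"
  have "t *\<^sub>R (x0 + a *\<^sub>R v) + (1 - t) *\<^sub>R (x0 + b *\<^sub>R v) = x0 + m *\<^sub>R v"
    unfolding m_def by (simp add: algebra_simps)
  moreover have "norm ((x0 + a *\<^sub>R v) - (x0 + b *\<^sub>R v)) = \<bar>a - b\<bar> * norm v"
    by (simp flip: scaleR_diff_left)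
  ultimately have ineq: "ereal t * (ereal c * (h a + ereal A)) + ereal (1 - t) * (ereal c * (h b + ereal A))
      + ereal (\<alpha> / 2 * t * (1 - t) * (\<bar>a - b\<bar> * norm v)\<^sup>2) \<le> ereal c * (h m + ereal A)"
    using sc t unfolding strongly_concave_def D_line[symmetric] by metis
  show "ereal t * h a + ereal (1 - t) * h b + ereal (\<alpha> * (norm v)\<^sup>2 / c / 2 * t * (1 - t) * (norm (a - b))\<^sup>2)
      \<le> h (t *\<^sub>R a + (1 - t) *\<^sub>R b)"
  proof (cases "h a = - \<infinity> \<or> h b = - \<infinity>")
    case True
    then show ?thesis
      using t h_fin[of a] h_fin[of b] by (cases "h a"; cases "h b") auto
  next
    case False
    then obtain p q where pq: "h a = ereal p" "h b = ereal q"
      using h_fin[of a] h_fin[of b] by (cases "h a"; cases "h b") auto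
    obtain r where r: "h m = ereal r"
      using ineq h_fin[of m] \<open>c > 0\<close> unfolding pq by (cases "h m") auto
    define K where "K = \<alpha> / 2 * t * (1 - t) * ((a - b)\<^sup>2 * (norm v)\<^sup>2)"
    have "K \<le> c * (r - t * p - (1 - t) * q)"
      using ineq unfolding pq r K_def by (simp add: algebra_simps power_mult_distrib)
    then have "K / c \<le> r - t * p - (1 - t) * q"
      using \<open>c > 0\<close> by (simp add: pos_divide_le_eq mult.commute)
    moreover have "\<alpha> * (norm v)\<^sup>2 / c / 2 * t * (1 - t) * (a - b)\<^sup>2 = K / c"
      unfolding K_def by (simp add: field_simps)
    ultimately show ?thesis
      using r unfolding pq m_def by simp
  qed
qed

lemma dual_obj_less_PInf:
  assumes "utility u"
  shows "dual_obj X u lam \<theta> < \<infinity>"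
  using uconj_less_PInf[OF assms] unfolding dual_obj_def by (simp add: sum_Pinfty)

lemma uconj_finite_if_dual_obj_finite:
  fixes X :: "real ^ 'd ^ 'n"
  assumes "utility u" and "dual_obj X u lam \<theta> > - \<infinity>"
  shows "uconj u (real CARD('n) * lam * \<theta> $ k) > - \<infinity>"
proof (rule ccontr)
  define F where "F k = uconj u (real CARD('n) * lam * \<theta> $ k)" for k
  assume "\<not> F k > - \<infinity>"
  then have "(\<Sum>k\<in>UNIV. F k) = - \<infinity>"
    using uconj_less_PInf[OF assms(1)] sum.remove[of UNIV k F]
    by (simp add: F_def sum_Pinfty)
  then show False
    using assms(2) unfolding dual_obj_def F_def by simp
qed

text \<open>Moving a single coordinate of a dual point with finite objective exhibits \<open>uconj u\<close> as
  an affine image of a restriction of \<open>dual_obj\<close> to a line.\<close>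
lemma uconj_strongly_concave_if_dual_obj_strongly_concave:
  fixes X :: "real ^ 'd ^ 'n" and \<theta>0 :: "real ^ 'n"
  assumes ut: "utility u" and "lam > 0" and sc: "strongly_concave \<alpha> (dual_obj X u lam)"
    and fin: "dual_obj X u lam \<theta>0 > - \<infinity>"
  shows "strongly_concave (\<alpha> / (real CARD('n) * lam\<^sup>2)) (uconj u)"
proof -
  define N where "N = real CARD('n)"
  have "N > 0" unfolding N_def by simp
  fix k :: 'n
  define A where "A = (\<Sum>k'\<in>UNIV - {k}. real_of_ereal (uconj u (N * lam * \<theta>0 $ k')))"
  define x0 where "x0 = \<theta>0 - (\<theta>0 $ k) *\<^sub>R axis k (1::real)"
  define v where "v = (1 / (N * lam)) *\<^sub>R axis k (1::real)"
  have terms_finite: "uconj u (N * lam * \<theta>0 $ k') = ereal (real_of_ereal (uconj u (N * lam * \<theta>0 $ k')))" for k'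
    using uconj_finite_if_dual_obj_finite[OF ut fin, of k'] uconj_less_PInf[OF ut]
    unfolding N_def by (cases "uconj u (real CARD('n) * lam * \<theta>0 $ k')") auto
  have line: "dual_obj X u lam (x0 + s *\<^sub>R v) = ereal (1 / N) * (uconj u s + ereal A)" for s
  proof -
    have line_nth: "N * lam * (x0 + s *\<^sub>R v) $ k' = (if k' = k then s else N * lam * \<theta>0 $ k')" for k'
      unfolding x0_def v_def using \<open>N > 0\<close> \<open>lam > 0\<close> by (simp add: axis_def)
    have "(\<Sum>k'\<in>UNIV. uconj u (N * lam * (x0 + s *\<^sub>R v) $ k'))
        = uconj u s + (\<Sum>k'\<in>UNIV - {k}. uconj u (N * lam * \<theta>0 $ k'))"
      unfolding line_nth sum.remove[OF finite UNIV_I, of _ k] by (simp cong: sum.cong_simp)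
    also have "\<dots> = uconj u s + ereal A"
      unfolding A_def by (subst terms_finite) simp
    finally show ?thesis
      unfolding dual_obj_def N_def by simp
  qed
  have "strongly_concave (\<alpha> * (norm v)\<^sup>2 / (1 / N)) (uconj u)"
    by (rule strongly_concave_restrict_line[OF sc _ _ line uconj_less_PInf[OF ut]])
      (use \<open>N > 0\<close> \<open>lam > 0\<close> in \<open>simp_all add: v_def\<close>)
  moreover have "\<alpha> * (norm v)\<^sup>2 / (1 / N) = \<alpha> / (N * lam\<^sup>2)"
    unfolding v_def using \<open>N > 0\<close> \<open>lam > 0\<close> by (simp add: field_simps power2_eq_square)
  ultimately show ?thesis
    unfolding N_def by simp
qed

lemma utility_real_valued:
  assumes ut: "utility u" and fin: "\<And>z. u z > - \<infinity>"
  obtains f where "u = ereal \<circ> f" and "concave_on UNIV f"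
proof -
  define f where "f z = real_of_ereal (u z)" for z
  have "u z < \<infinity>" for z
    using ut unfolding utility_def by blast
  then have uf: "u z = ereal (f z)" for z
    using fin[of z] unfolding f_def by (cases "u z") auto
  have "concave_on UNIV f"
  proof (rule concave_on_linorderI)
    fix t x y :: real
    assume "0 < t" "t < 1"
    have "ext_concave u"
      using ut unfolding utility_def by simp
    then have "0 < 1 - t \<and> 1 - t < 1 \<longrightarrow>
        ereal (1 - t) * u x + ereal (1 - (1 - t)) * u y \<le> u ((1 - t) * x + (1 - (1 - t)) * y)"
      unfolding ext_concave_def by blast
    then have "ereal (1 - t) * u x + ereal t * u y \<le> u ((1 - t) * x + t * y)"
      using \<open>0 < t\<close> \<open>t < 1\<close> by simp
    then show "(1 - t) * f x + t * f y \<le> f ((1 - t) *\<^sub>R x + t *\<^sub>R y)"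
      unfolding uf by simp
  qed simp
  moreover have "u = ereal \<circ> f"
    using uf by auto
  ultimately show ?thesis
    using that by blast
qed

lemma utility_differentiable_if_dual_obj_strongly_concave:
  fixes X :: "real ^ 'd ^ 'n" and \<theta>0 :: "real ^ 'n"
  assumes ut: "utility u" and "lam > 0" and sc: "strongly_concave \<alpha> (dual_obj X u lam)"
    and fin: "dual_obj X u lam \<theta>0 > - \<infinity>"
  obtains f f' where "u = ereal \<circ> f"
    and "\<And>z. (f has_real_derivative f' z) (at z)" and "\<And>z. supergradient f z (f' z)"
proof -
  have sc_uconj: "strongly_concave (\<alpha> / (real CARD('n) * lam\<^sup>2)) (uconj u)"
    using uconj_strongly_concave_if_dual_obj_strongly_concave[OF ut \<open>lam > 0\<close> sc fin] .
  fix k :: 'n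
  obtain p0 where "uconj u (real CARD('n) * lam * \<theta>0 $ k) = ereal p0"
    using uconj_finite_if_dual_obj_finite[OF ut fin, of k] uconj_less_PInf[OF ut]
    by (cases "uconj u (real CARD('n) * lam * \<theta>0 $ k)") auto
  then have "u z > - \<infinity>" for z
    using utility_finite_if_uconj_strongly_concave[OF ut sc_uconj] by blast
  then obtain f where u: "u = ereal \<circ> f" and conc: "concave_on UNIV f"
    using utility_real_valued[OF ut] by blast
  have "g = g'" if "supergradient f z g" "supergradient f z g'" for z g g'
    using supergradient_unique_if_uconj_strongly_concave[OF _ that] sc_uconj unfolding u .
  then have "\<exists>g. (f has_real_derivative g) (at z) \<and> supergradient f z g" for z
    using concave_has_real_derivative_if_unique_supergradient[OF conc] by metis
  then obtain f' where "\<And>z. (f has_real_derivative f' z) (at z)" "\<And>z. supergradient f z (f' z)"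
    by metis
  with that u show ?thesis .
qed

lemma column_inner_eq_transpose_mult_vec:
  fixes X :: "real ^ 'd ^ 'n"
  shows "column j X \<bullet> \<theta> = (transpose X *v \<theta>) $ j"
  by (simp add: matrix_vector_mul_component column_def transpose_def)

lemma inner_transpose_mult_vec:
  fixes X :: "real ^ 'd ^ 'n"
  shows "w \<bullet> (transpose X *v \<theta>) = (\<Sum>k\<in>UNIV. \<theta> $ k * (w \<bullet> X $ k))"
  unfolding inner_vec_def matrix_vector_mult_def transpose_def
  by (simp add: sum_distrib_left algebra_simps) (rule sum.swap)

lemma infnorm_phi_le_1_iff: "infnorm (phi v) \<le> 1 \<longleftrightarrow> (\<forall>i. v $ i \<le> 1)"
proof -
  have "infnorm (phi v) = Sup (range (\<lambda>i. max (v $ i) 0))"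
    unfolding infnorm_cart phi_def by (simp add: setcompr_eq_image full_SetCompr_eq)
  also have "\<dots> \<le> 1 \<longleftrightarrow> (\<forall>i. max (v $ i) 0 \<le> 1)"
    by (subst cSup_le_iff) auto
  finally show ?thesis by simp
qed

lemma dual_feasible_iff:
  "\<theta> \<in> dual_feasible X u lam \<longleftrightarrow> dual_obj X u lam \<theta> > - \<infinity> \<and> (\<forall>i. (transpose X *v \<theta>) $ i \<le> 1)"
  unfolding dual_feasible_def infnorm_phi_le_1_iff by simp

lemma convex_dual_constraint:
  fixes X :: "real ^ 'd ^ 'n"
  shows "convex {\<theta>. \<forall>i. (transpose X *v \<theta>) $ i \<le> 1}"
proof -
  have "{\<theta>. \<forall>i. (transpose X *v \<theta>) $ i \<le> 1} = (\<Inter>i. {\<theta>. column i X \<bullet> \<theta> \<le> 1})"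
    by (auto simp: column_inner_eq_transpose_mult_vec)
  then show ?thesis
    by (simp add: convex_INT convex_halfspace_le)
qed

lemma l1norm_nonneg: "(\<And>i. 0 \<le> w $ i) \<Longrightarrow> l1norm w = (\<Sum>i\<in>UNIV. w $ i)"
  unfolding l1norm_def by simp

lemma primal_obj_real:
  fixes X :: "real ^ 'd ^ 'n"
  shows "primal_obj X (ereal \<circ> f) lam w
    = ereal (lam * l1norm w - (1 / real CARD('n)) * (\<Sum>k\<in>UNIV. f (w \<bullet> X $ k)))"
  unfolding primal_obj_def by simp

lemma primal_feasible_real: "primal_feasible X (ereal \<circ> f) lam = {w. \<forall>i. 0 \<le> w $ i}"
  unfolding primal_feasible_def primal_obj_real by simp

lemma dual_obj_le_lagrangian:
  fixes X :: "real ^ 'd ^ 'n"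
  shows "dual_obj X (ereal \<circ> f) lam \<theta>
    \<le> ereal (lam * (w \<bullet> (transpose X *v \<theta>)) - (1 / real CARD('n)) * (\<Sum>k\<in>UNIV. f (w \<bullet> X $ k)))"
proof -
  define N where "N = real CARD('n)"
  have "(\<Sum>k\<in>UNIV. uconj (ereal \<circ> f) (N * lam * \<theta> $ k))
      \<le> (\<Sum>k\<in>UNIV. ereal (N * lam * \<theta> $ k * (w \<bullet> X $ k) - f (w \<bullet> X $ k)))"
    by (rule sum_mono) (use uconj_le[of "ereal \<circ> f"] in simp)
  then have "dual_obj X (ereal \<circ> f) lam \<theta>
      \<le> ereal (1 / N) * ereal (\<Sum>k\<in>UNIV. N * lam * \<theta> $ k * (w \<bullet> X $ k) - f (w \<bullet> X $ k))"
    unfolding dual_obj_def N_def[symmetric] sum_ereal by (rule ereal_mult_left_mono) (simp add: N_def)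
  also have "\<dots> = ereal (lam * (w \<bullet> (transpose X *v \<theta>)) - (1 / N) * (\<Sum>k\<in>UNIV. f (w \<bullet> X $ k)))"
    unfolding inner_transpose_mult_vec N_def
    by (simp add: sum_subtractf sum_distrib_left right_diff_distrib mult_ac)
  finally show ?thesis
    unfolding N_def .
qed

lemma weak_duality:
  fixes X :: "real ^ 'd ^ 'n"
  assumes "\<theta> \<in> dual_feasible X (ereal \<circ> f) lam" and "\<And>i. 0 \<le> w $ i" and "lam \<ge> 0"
  shows "dual_obj X (ereal \<circ> f) lam \<theta> \<le> primal_obj X (ereal \<circ> f) lam w"
proof -
  have "w \<bullet> (transpose X *v \<theta>) \<le> l1norm w"
    unfolding l1norm_nonneg[OF assms(2)] inner_vec_def
    using assms(1,2) unfolding dual_feasible_iff by (intro sum_mono) (simp add: mult_left_le)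
  then show ?thesis
    using dual_obj_le_lagrangian[of X f lam \<theta> w] \<open>lam \<ge> 0\<close>
    unfolding primal_obj_real by (simp add: mult_left_mono order_trans)
qed

lemma complementary_slackness:
  fixes X :: "real ^ 'd ^ 'n"
  assumes "primal_obj X (ereal \<circ> f) lam w \<le> dual_obj X (ereal \<circ> f) lam \<theta>"
    and "\<theta> \<in> dual_feasible X (ereal \<circ> f) lam" and "\<And>i. 0 \<le> w $ i" and "lam > 0"
    and "(transpose X *v \<theta>) $ j < 1"
  shows "w $ j = 0"
proof -
  define slack where "slack i = w $ i * (1 - (transpose X *v \<theta>) $ i)" for i
  have "lam * l1norm w \<le> lam * (w \<bullet> (transpose X *v \<theta>))"
    using order_trans[OF assms(1) dual_obj_le_lagrangian[of X f lam \<theta> w]]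
    unfolding primal_obj_real by simp
  then have "(\<Sum>i\<in>UNIV. slack i) \<le> 0"
    using \<open>lam > 0\<close> unfolding slack_def l1norm_nonneg[OF assms(3)] inner_vec_def
    by (simp add: right_diff_distrib sum_subtractf)
  moreover have slack_nonneg: "0 \<le> slack i" for i
    using assms(2,3) unfolding slack_def dual_feasible_iff by simp
  ultimately have "(\<Sum>i\<in>UNIV. slack i) = 0"
    by (simp add: antisym sum_nonneg)
  then have "slack j = 0"
    using sum_nonneg_eq_0_iff[of UNIV slack] slack_nonneg by simp
  then show ?thesis
    using assms(5) unfolding slack_def by simp
qed

text \<open>On the nonnegative orthant the \<open>\<ell>\<^sub>1\<close>-norm is linear, so the primal objective is
  differentiable along the segment from \<open>w\<close> to \<open>w + h\<close>.\<close>
lemma primal_min_directional: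
  fixes X :: "real ^ 'd ^ 'n"
  assumes f': "\<And>z. (f has_real_derivative f' z) (at z)"
    and min: "\<And>v. (\<And>i. 0 \<le> v $ i) \<Longrightarrow> primal_obj X (ereal \<circ> f) lam w \<le> primal_obj X (ereal \<circ> f) lam v"
    and w: "\<And>i. 0 \<le> w $ i" and h: "\<And>i. 0 \<le> w $ i + h $ i"
  shows "(1 / real CARD('n)) * (\<Sum>k\<in>UNIV. f' (w \<bullet> X $ k) * (h \<bullet> X $ k)) \<le> lam * (\<Sum>i\<in>UNIV. h $ i)"
proof (rule ccontr)
  define N where "N = real CARD('n)"
  define \<psi> where "\<psi> t = lam * (\<Sum>i\<in>UNIV. w $ i + t * h $ i) - (1 / N) * (\<Sum>k\<in>UNIV. f (w \<bullet> X $ k + t * (h \<bullet> X $ k)))"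
    for t
  have "((\<lambda>t. f (w \<bullet> X $ k + t * (h \<bullet> X $ k))) has_real_derivative f' (w \<bullet> X $ k) * (h \<bullet> X $ k)) (at 0)"
    for k
  proof -
    have "((\<lambda>t. w \<bullet> X $ k + t * (h \<bullet> X $ k)) has_real_derivative h \<bullet> X $ k) (at 0)"
      by (auto intro!: derivative_eq_intros)
    from DERIV_chain2[OF f' this] show ?thesis
      by simp
  qed
  then have "(\<psi> has_real_derivative lam * (\<Sum>i\<in>UNIV. h $ i) - (1 / N) * (\<Sum>k\<in>UNIV. f' (w \<bullet> X $ k) * (h \<bullet> X $ k))) (at 0)"
    unfolding \<psi>_def N_def by (auto intro!: derivative_eq_intros)
  moreover assume "\<not> ?thesis"
  then have "lam * (\<Sum>i\<in>UNIV. h $ i) - (1 / N) * (\<Sum>k\<in>UNIV. f' (w \<bullet> X $ k) * (h \<bullet> X $ k)) < 0"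
    unfolding N_def by simp
  ultimately obtain d where "d > 0" and dec: "\<forall>t>0. t < d \<longrightarrow> \<psi> 0 > \<psi> (0 + t)"
    using DERIV_neg_dec_right by blast
  define t where "t = min (d / 2) (1 / 2)"
  have t: "0 < t" "t < d" "t \<le> 1"
    using \<open>d > 0\<close> unfolding t_def by auto
  have wt: "0 \<le> (w + t *\<^sub>R h) $ i" for i
  proof -
    have "(w + t *\<^sub>R h) $ i = (1 - t) * w $ i + t * (w $ i + h $ i)"
      by (simp add: algebra_simps)
    then show ?thesis
      using w[of i] h[of i] t by simp
  qed
  have "primal_obj X (ereal \<circ> f) lam (w + t *\<^sub>R h) = ereal (\<psi> t)"
    unfolding primal_obj_real l1norm_nonneg[OF wt] \<psi>_def N_def by (simp add: inner_add_left)
  moreover have "primal_obj X (ereal \<circ> f) lam w = ereal (\<psi> 0)"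
    unfolding primal_obj_real l1norm_nonneg[OF w] \<psi>_def N_def by simp
  ultimately show False
    using min[OF wt] dec t by fastforce
qed

text \<open>The certificate is \<open>\<theta>\<^sub>k = f'(w \<bullet> X\<^sub>k) / (n \<lambda>)\<close>: the directions \<open>\<plusminus>w\<close> make its dual value
  equal to the primal one, the coordinate directions make it feasible.\<close>
lemma dual_certificate_of_primal_min:
  fixes X :: "real ^ 'd ^ 'n"
  assumes "lam > 0"
    and f': "\<And>z. (f has_real_derivative f' z) (at z)" and supergrad: "\<And>z. supergradient f z (f' z)"
    and min: "\<And>v. (\<And>i. 0 \<le> v $ i) \<Longrightarrow> primal_obj X (ereal \<circ> f) lam w \<le> primal_obj X (ereal \<circ> f) lam v"
    and w: "\<And>i. 0 \<le> w $ i"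
  obtains \<theta> where "\<theta> \<in> dual_feasible X (ereal \<circ> f) lam"
    and "dual_obj X (ereal \<circ> f) lam \<theta> = primal_obj X (ereal \<circ> f) lam w"
proof -
  define N where "N = real CARD('n)"
  have "N > 0" unfolding N_def by simp
  define z where "z k = w \<bullet> X $ k" for k
  define \<theta> where "\<theta> = (\<chi> k. f' (z k) / (N * lam))"
  note directional = primal_min_directional[OF f' min w, folded N_def z_def]
  have constraint: "(transpose X *v \<theta>) $ j \<le> 1" for j
  proof -
    have "0 \<le> w $ i + axis j 1 $ i" for i
      using w[of i] by (simp add: axis_def)
    moreover have "(\<Sum>i\<in>UNIV. axis j (1::real) $ i) = 1"
      by (simp add: axis_def)
    ultimately have "(1 / N) * (\<Sum>k\<in>UNIV. f' (z k) * X $ k $ j) \<le> lam"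
      using directional[of "axis j 1"] by (simp add: inner_axis')
    then show ?thesis
      unfolding \<theta>_def matrix_vector_mult_def transpose_def using \<open>N > 0\<close> \<open>lam > 0\<close>
      by (simp add: sum_divide_distrib[symmetric] field_simps mult.commute)
  qed
  have euler: "(1 / N) * (\<Sum>k\<in>UNIV. f' (z k) * z k) = lam * (\<Sum>i\<in>UNIV. w $ i)"
  proof (rule antisym)
    show "(1 / N) * (\<Sum>k\<in>UNIV. f' (z k) * z k) \<le> lam * (\<Sum>i\<in>UNIV. w $ i)"
      using directional[of w] w unfolding z_def by (simp add: add_nonneg_nonneg)
    show "lam * (\<Sum>i\<in>UNIV. w $ i) \<le> (1 / N) * (\<Sum>k\<in>UNIV. f' (z k) * z k)"
      using directional[of "- w"] unfolding z_def by (simp add: sum_negf)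
  qed
  have "dual_obj X (ereal \<circ> f) lam \<theta> = ereal ((1 / N) * (\<Sum>k\<in>UNIV. f' (z k) * z k - f (z k)))"
    unfolding dual_obj_def N_def[symmetric] \<theta>_def
    using \<open>N > 0\<close> \<open>lam > 0\<close> by (simp add: uconj_supergradient[OF supergrad])
  also have "\<dots> = primal_obj X (ereal \<circ> f) lam w"
    unfolding primal_obj_real l1norm_nonneg[OF w] N_def[symmetric] z_def[symmetric]
      sum_subtractf right_diff_distrib euler ..
  finally have "dual_obj X (ereal \<circ> f) lam \<theta> = primal_obj X (ereal \<circ> f) lam w" .
  moreover have "\<theta> \<in> dual_feasible X (ereal \<circ> f) lam"
    unfolding dual_feasible_iff using calculation constraint by (simp add: primal_obj_real)
  ultimately show ?thesis
    using that by blast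
qed

lemma strongly_concave_dist_maximizer_le:
  fixes D :: "'a::real_normed_vector \<Rightarrow> ereal"
  assumes sc: "strongly_concave \<alpha> D" and "convex S" and "x \<in> S" "x' \<in> S"
    and max: "\<And>y. y \<in> S \<Longrightarrow> D y \<le> D x'" and "D x = ereal a" "D x' = ereal b"
  shows "\<alpha> / 2 * (dist x x')\<^sup>2 \<le> b - a"
proof (rule field_le_mult_one_interval)
  fix s :: real
  assume s: "0 < s" "s < 1"
  have "\<forall>a b t. 0 < t \<and> t < 1 \<longrightarrow> ereal t * D a + ereal (1 - t) * D b
      + ereal (\<alpha> / 2 * t * (1 - t) * (norm (a - b))\<^sup>2) \<le> D (t *\<^sub>R a + (1 - t) *\<^sub>R b)"
    using sc unfolding strongly_concave_def by blast
  from this[rule_format, of "1 - s" x x'] s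
  have "ereal (1 - s) * D x + ereal (1 - (1 - s)) * D x' + ereal (\<alpha> / 2 * (1 - s) * (1 - (1 - s)) * (norm (x - x'))\<^sup>2)
      \<le> D ((1 - s) *\<^sub>R x + (1 - (1 - s)) *\<^sub>R x')"
    by simp
  also have "\<dots> \<le> D x'"
    using s by (intro max convexD[OF \<open>convex S\<close> \<open>x \<in> S\<close> \<open>x' \<in> S\<close>]) auto
  finally have "(1 - s) * (s * (\<alpha> / 2 * (dist x x')\<^sup>2)) \<le> (1 - s) * (b - a)"
    using assms(6,7) by (simp add: dist_norm algebra_simps)
  then show "s * (\<alpha> / 2 * (dist x x')\<^sup>2) \<le> b - a"
    using s by simp
qed

lemma inner_le_of_dist_le:
  fixes a x y :: "'a::real_inner"
  assumes "dist x y \<le> r"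
  shows "a \<bullet> y \<le> a \<bullet> x + r * norm a"
proof -
  have "a \<bullet> y = a \<bullet> x + a \<bullet> (y - x)"
    by (simp add: inner_diff_right)
  also have "\<dots> \<le> a \<bullet> x + norm a * dist x y"
    using norm_cauchy_schwarz[of a "y - x"] by (simp add: dist_norm norm_minus_commute)
  also have "\<dots> \<le> a \<bullet> x + r * norm a"
    using mult_left_mono[OF assms norm_ge_zero[of a]] by (simp add: mult.commute)
  finally show ?thesis .
qed

lemma dist_dual_optimum_le_gap_radius:
  fixes X :: "real ^ 'd ^ 'n"
  assumes ut: "utility (ereal \<circ> f)" and "lam \<ge> 0"
    and sc: "strongly_concave \<alpha> (dual_obj X (ereal \<circ> f) lam)"
    and \<theta>star: "\<theta>star \<in> dual_feasible X (ereal \<circ> f) lam"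
    and max: "\<forall>v\<in>dual_feasible X (ereal \<circ> f) lam. dual_obj X (ereal \<circ> f) lam v \<le> dual_obj X (ereal \<circ> f) lam \<theta>star"
    and \<theta>: "\<theta> \<in> dual_feasible X (ereal \<circ> f) lam" and w: "\<And>i. 0 \<le> w $ i"
  shows "dist \<theta> \<theta>star \<le> sqrt (2 * real_of_ereal (gap X (ereal \<circ> f) lam w \<theta>) / \<alpha>)"
proof -
  let ?D = "dual_obj X (ereal \<circ> f) lam"
  let ?S = "{\<theta>. \<forall>i. (transpose X *v \<theta>) $ i \<le> 1}"
  have "\<exists>a. ?D v = ereal a" if "v \<in> dual_feasible X (ereal \<circ> f) lam" for v
    using that dual_obj_less_PInf[OF ut, of X lam v] unfolding dual_feasible_iff
    by (cases "?D v") auto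
  then obtain a b where a: "?D \<theta> = ereal a" and b: "?D \<theta>star = ereal b"
    using \<theta> \<theta>star by blast
  have "\<alpha> / 2 * (dist \<theta> \<theta>star)\<^sup>2 \<le> b - a"
  proof (rule strongly_concave_dist_maximizer_le[OF sc convex_dual_constraint _ _ _ a b])
    show "\<theta> \<in> ?S" "\<theta>star \<in> ?S"
      using \<theta> \<theta>star unfolding dual_feasible_iff by auto
    show "?D v \<le> ?D \<theta>star" if "v \<in> ?S" for v
      using that max[rule_format, of v] unfolding dual_feasible_iff by (cases "?D v = - \<infinity>") auto
  qed
  also have "\<dots> \<le> real_of_ereal (gap X (ereal \<circ> f) lam w \<theta>)"
    using weak_duality[OF \<theta>star w \<open>lam \<ge> 0\<close>] unfolding gap_def primal_obj_real a b by simp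
  finally show ?thesis
    using sc unfolding strongly_concave_def by (intro real_le_rsqrt) (simp add: field_simps)
qed

theorem theorem4:
  fixes X :: "real ^ 'd ^ 'n" and u :: "real \<Rightarrow> ereal" and lam \<alpha> :: real
    and wstar w :: "real ^ 'd" and \<theta>star \<theta> :: "real ^ 'n"
  assumes "utility u" and "lam > 0"
    and "wstar \<in> primal_feasible X u lam"
    and "\<forall>v\<in>primal_feasible X u lam. primal_obj X u lam wstar \<le> primal_obj X u lam v"
    and "\<theta>star \<in> dual_feasible X u lam"
    and "\<forall>v\<in>dual_feasible X u lam. dual_obj X u lam v \<le> dual_obj X u lam \<theta>star"
    and "strongly_concave \<alpha> (dual_obj X u lam)"
    and "w \<in> primal_feasible X u lam" and "\<theta> \<in> dual_feasible X u lam"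
  shows "\<theta>star \<in> cball \<theta> (sqrt (2 * real_of_ereal (gap X u lam w \<theta>) / \<alpha>))
    \<and> (\<forall>j. max (column j X \<bullet> \<theta>) 0
              + sqrt (2 * real_of_ereal (gap X u lam w \<theta>) / \<alpha>) * norm (column j X) < 1
           \<longrightarrow> wstar $ j = 0)"
proof -
  have "dual_obj X u lam \<theta>star > - \<infinity>"
    using assms(5) unfolding dual_feasible_iff by blast
  then obtain f f' where u: "u = ereal \<circ> f"
    and f': "\<And>z. (f has_real_derivative f' z) (at z)" and supergrad: "\<And>z. supergradient f z (f' z)"
    using utility_differentiable_if_dual_obj_strongly_concave[OF assms(1,2,7)] by blast
  note hyps = assms[unfolded u primal_feasible_real, simplified]
  obtain \<theta>c where "\<theta>c \<in> dual_feasible X (ereal \<circ> f) lam"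
    and "dual_obj X (ereal \<circ> f) lam \<theta>c = primal_obj X (ereal \<circ> f) lam wstar"
    using dual_certificate_of_primal_min[OF \<open>lam > 0\<close> f' supergrad] hyps(3,4) by blast
  then have no_gap: "primal_obj X (ereal \<circ> f) lam wstar \<le> dual_obj X (ereal \<circ> f) lam \<theta>star"
    using hyps(6) by metis
  define r where "r = sqrt (2 * real_of_ereal (gap X (ereal \<circ> f) lam w \<theta>) / \<alpha>)"
  have "dist \<theta> \<theta>star \<le> r"
    unfolding r_def using hyps(2,8)
    by (intro dist_dual_optimum_le_gap_radius[OF hyps(1) _ hyps(7,5,6,9)]) auto
  moreover have "wstar $ j = 0" if "max (column j X \<bullet> \<theta>) 0 + r * norm (column j X) < 1" for j
  proof (rule complementary_slackness[OF no_gap hyps(5)])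
    show "(transpose X *v \<theta>star) $ j < 1"
      using inner_le_of_dist_le[OF \<open>dist \<theta> \<theta>star \<le> r\<close>, of "column j X"] that
      unfolding column_inner_eq_transpose_mult_vec by linarith
  qed (use hyps(2,3) in auto)
  ultimately show ?thesis
    unfolding u r_def by (simp add: dist_commute)
qed

end
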